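(* Let $\lambda>0$, $\kappa>0$ and $\mu>0$ be fixed real numbers and let $m$ be a fixed positive integer. For $\alpha>0$ define $$I_{1}(m,\alpha)=\int_{0}^{\infty}x^{\mu-1}e^{-\lambda x}\left|\mathcal{L}_{m}^{(\alpha)}(x)\right|^{\kappa}\,dx .$$ Then there are coefficients $D_0,D_1,D_2,\ldots$, not depending on $\alpha$, such that $$I_{1}(m,\alpha)\sim \frac{\alpha^{\kappa m}\,\Gamma(\mu)}{\lambda^{\mu}\,(m!)^{\kappa}}\sum_{k=0}^{\infty}\frac{D_k}{\alpha^{k}},\qquad \alpha\to\infty .$$ The first three coefficients are $$D_0=1,\qquad D_1=\frac{\kappa m\,(-2\mu+m\lambda+\lambda)}{2\lambda},$$ $$D_2=\frac{\kappa m}{24\lambda^{2}}\Bigl(-12\mu\lambda\kappa m^{2}+24\mu\lambda-12\mu\lambda\kappa m-4m^{2}\lambda^{2}-6m\lambda^{2}+3m^{3}\lambda^{2}\kappa-12\mu^{2}+12\mu^{2}\kappa m-12\mu+12\mu\kappa m+6\lambda^{2}\kappa m^{2}-2\lambda^{2}+3\lambda^{2}\kappa m\Bigr).$$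
   Context: $\mathcal{L}_{m}^{(\alpha)}(x)$ denotes the standard (generalized) Laguerre polynomial of degree $m$ and parameter $\alpha$, $\mathcal{L}_{m}^{(\alpha)}(x)=\sum_{k=0}^{m}\binom{m+\alpha}{m-k}\frac{(-x)^k}{k!}$. The symbol $\sim$ denotes a Poincaré-type asymptotic expansion: for every integer $N\ge 0$, $I_1(m,\alpha)=\frac{\alpha^{\kappa m}\Gamma(\mu)}{\lambda^{\mu}(m!)^{\kappa}}\left(\sum_{k=0}^{N-1}D_k\alpha^{-k}+O(\alpha^{-N})\right)$ as $\alpha\to\infty$, with all other parameters fixed. *)

theory Defs
  imports "HOL-Analysis.Analysis" "HOL-Library.Landau_Symbols"
begin

definition laguerre :: "nat \<Rightarrow> real \<Rightarrow> real \<Rightarrow> real" where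
  "laguerre m a x = (\<Sum>k\<le>m. ((real m + a) gchoose (m - k)) * (- x) ^ k / fact k)"

definition I1 :: "real \<Rightarrow> real \<Rightarrow> real \<Rightarrow> nat \<Rightarrow> real \<Rightarrow> real" where
  "I1 lam kap mu m a =
     (LINT x:{0<..}|lborel. x powr (mu - 1) * exp (- lam * x) * \<bar>laguerre m a x\<bar> powr kap)"

end

(*
  Rescaling the summation index gives laguerre m a x = a^m / m! * R(1/a, x) for a bivariate
  polynomial R with R(0, x) = 1.  Hence, with t = 1/a and the Gamma weight
  w(x) = x^(mu-1) e^(-lam x), the integral I_1 equals (a^m/m!)^kap times the integral of
  w(x) |R(t, x)|^kap.  Writing R = 1 + t Q, the binomial series of |1 + e|^kap truncated after
  N terms has remainder O(|e|^N (1 + |e|)^ceil(kap)), i.e. O(t^N) times a polynomial in x.  Up to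
  O(t^N) the integrand is therefore w times a polynomial in (t, x); integrating against w turns
  each power x^i into Gamma(mu + i) / lam^(mu + i), so the integral is a polynomial in t up to
  O(t^N), whose coefficients D_k do not depend on N.  D_1 and D_2 are computed from the
  t-coefficients of R of order at most 2.
*)

theory Submission
  imports Defs "HOL-Computational_Algebra.Polynomial"
begin

section \<open>Integrals against the Gamma weight\<close>

definition gamma_weight :: "real \<Rightarrow> real \<Rightarrow> real \<Rightarrow> real" where
  "gamma_weight lam mu x = x powr (mu - 1) * exp (- lam * x)"

definition gamma_moment :: "real \<Rightarrow> real \<Rightarrow> nat \<Rightarrow> real" where
  "gamma_moment lam mu i = Gamma (mu + real i) / lam powr (mu + real i)"

lemma has_bochner_integral_Gamma_real:
  assumes "s > (0::real)"
  shows "has_bochner_integral lborel (\<lambda>t. indicator {0..} t * t powr (s - 1) / exp t) (Gamma s)"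
proof (rule has_bochner_integral_nn_integral)
  show "(\<lambda>t. indicator {0..} t * t powr (s - 1) / exp t) \<in> borel_measurable lborel"
    by measurable
  show "AE x in lborel. 0 \<le> indicator {0..} x * x powr (s - 1) / exp x"
    by (auto simp: indicator_def)
  show "0 \<le> Gamma s"
    using assms by (simp add: less_imp_le)
  show "(\<integral>\<^sup>+ x. ennreal (indicator {0..} x * x powr (s - 1) / exp x) \<partial>lborel) = ennreal (Gamma s)"
    using Gamma_conv_nn_integral_real[OF assms] by simp
qed

lemma
  assumes lam: "lam > 0" and s: "s > (0::real)"
  shows set_integrable_gamma_weight: "set_integrable lborel {0<..} (gamma_weight lam s)"
    and set_integral_gamma_weight: "(LINT x:{0<..}|lborel. gamma_weight lam s x) = Gamma s / lam powr s"
proof -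
  let ?g = "\<lambda>t. indicator {0..} t * t powr (s - 1) / exp t"
  have g: "integrable lborel ?g" "integral\<^sup>L lborel ?g = Gamma s"
    using has_bochner_integral_Gamma_real[OF s] by (auto simp: has_bochner_integral_iff)
  have g_scaled: "integrable lborel (\<lambda>x. ?g (0 + lam * x))"
    using lborel_integrable_real_affine[OF g(1), of lam 0] lam by simp
  have "integral\<^sup>L lborel ?g = lam * (\<integral>x. ?g (0 + lam * x) \<partial>lborel)"
    using lborel_integral_real_affine[of lam ?g 0] lam by simp
  then have int_scaled: "(\<integral>x. ?g (0 + lam * x) \<partial>lborel) = Gamma s / lam"
    using g(2) lam by (simp add: field_simps)
  have substitution:
    "indicator {0<..} x *\<^sub>R gamma_weight lam s x = lam powr (1 - s) * ?g (0 + lam * x)" for x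
  proof (cases "x > 0")
    case True
    have "(lam * x) powr (s - 1) = lam powr (s - 1) * x powr (s - 1)"
      using True lam by (simp add: powr_mult)
    moreover have "lam powr (1 - s) * lam powr (s - 1) = 1"
      using lam by (simp add: powr_add [symmetric])
    ultimately show ?thesis
      using True lam by (simp add: gamma_weight_def indicator_def exp_minus field_simps)
  next
    case False
    then show ?thesis
      using lam by (auto simp: indicator_def zero_le_mult_iff)
  qed
  show "set_integrable lborel {0<..} (gamma_weight lam s)"
    unfolding set_integrable_def substitution by (rule integrable_mult_right[OF g_scaled])
  have "(LINT x:{0<..}|lborel. gamma_weight lam s x) = lam powr (1 - s) * (Gamma s / lam)"
    unfolding set_lebesgue_integral_def substitution int_scaled [symmetric]
    by (rule integral_mult_right_zero)
  also have "\<dots> = Gamma s / lam powr s"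
    using lam by (simp add: powr_diff field_simps)
  finally show "(LINT x:{0<..}|lborel. gamma_weight lam s x) = Gamma s / lam powr s" .
qed

lemma gamma_weight_nonneg: "gamma_weight lam mu x \<ge> 0"
  by (simp add: gamma_weight_def)

lemma gamma_weight_mult_power:
  "x > 0 \<Longrightarrow> gamma_weight lam mu x * x ^ i = gamma_weight lam (mu + real i) x"
  by (simp add: gamma_weight_def powr_realpow [symmetric] powr_add [symmetric] algebra_simps)

lemma
  assumes lam: "lam > 0" and mu: "mu > 0"
  shows set_integrable_gamma_weight_power:
      "set_integrable lborel {0<..} (\<lambda>x. gamma_weight lam mu x * x ^ i)"
    and set_integral_gamma_weight_power:
      "(LINT x:{0<..}|lborel. gamma_weight lam mu x * x ^ i) = gamma_moment lam mu i"
proof -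
  have s: "mu + real i > 0"
    using mu by simp
  show "set_integrable lborel {0<..} (\<lambda>x. gamma_weight lam mu x * x ^ i)"
  proof -
    have "set_integrable lborel {0<..} (\<lambda>x. gamma_weight lam mu x * x ^ i)
        = set_integrable lborel {0<..} (gamma_weight lam (mu + real i))"
      by (rule set_integrable_cong) (auto simp: gamma_weight_mult_power)
    then show ?thesis
      using set_integrable_gamma_weight[OF lam s] by simp
  qed
  have "(LINT x:{0<..}|lborel. gamma_weight lam mu x * x ^ i)
      = (LINT x:{0<..}|lborel. gamma_weight lam (mu + real i) x)"
    by (rule set_lebesgue_integral_cong) (auto simp: gamma_weight_mult_power)
  also have "\<dots> = gamma_moment lam mu i"
    using set_integral_gamma_weight[OF lam s] by (simp add: gamma_moment_def)
  finally show "(LINT x:{0<..}|lborel. gamma_weight lam mu x * x ^ i) = gamma_moment lam mu i" .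
qed

lemma gamma_moment_0: "gamma_moment lam mu 0 = Gamma mu / lam powr mu"
  by (simp add: gamma_moment_def)

lemma gamma_moment_pos: "lam > 0 \<Longrightarrow> mu > 0 \<Longrightarrow> gamma_moment lam mu i > 0"
  by (simp add: gamma_moment_def Gamma_real_pos)

lemma gamma_moment_Suc:
  assumes lam: "lam > 0" and mu: "mu > 0"
  shows "gamma_moment lam mu (Suc i) = (mu + real i) / lam * gamma_moment lam mu i"
proof -
  have "mu + real i \<notin> \<int>\<^sub>\<le>\<^sub>0"
    using mu nonpos_Ints_nonpos by force
  then have "Gamma (mu + real (Suc i)) = (mu + real i) * Gamma (mu + real i)"
    using Gamma_plus1[of "mu + real i"] by (simp add: add_ac)
  moreover have "lam powr (mu + real (Suc i)) = lam powr (mu + real i) * lam"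
    using lam by (simp add: powr_add)
  ultimately show ?thesis
    by (simp only: gamma_moment_def) simp
qed

lemma
  fixes f :: "'i \<Rightarrow> 'a \<Rightarrow> real"
  assumes "\<And>i. i \<in> I \<Longrightarrow> set_integrable M A (f i)"
  shows set_integrable_sum: "set_integrable M A (\<lambda>x. \<Sum>i\<in>I. f i x)"
    and set_integral_sum: "(LINT x:A|M. (\<Sum>i\<in>I. f i x)) = (\<Sum>i\<in>I. LINT x:A|M. f i x)"
proof -
  have eq: "(\<lambda>x. indicator A x *\<^sub>R (\<Sum>i\<in>I. f i x)) = (\<lambda>x. \<Sum>i\<in>I. indicator A x *\<^sub>R f i x)"
    by (simp add: sum_distrib_left)
  show "set_integrable M A (\<lambda>x. \<Sum>i\<in>I. f i x)"
    unfolding set_integrable_def eq using assms unfolding set_integrable_def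
    by (auto intro!: integrable_sum)
  show "(LINT x:A|M. (\<Sum>i\<in>I. f i x)) = (\<Sum>i\<in>I. LINT x:A|M. f i x)"
    unfolding set_lebesgue_integral_def eq using assms unfolding set_integrable_def
    by (rule Bochner_Integration.integral_sum) auto
qed

definition moment_functional :: "real \<Rightarrow> real \<Rightarrow> real poly \<Rightarrow> real" where
  "moment_functional lam mu q = (\<Sum>i\<le>degree q. coeff q i * gamma_moment lam mu i)"

lemma
  assumes lam: "lam > 0" and mu: "mu > 0"
  shows set_integrable_gamma_weight_poly:
      "set_integrable lborel {0<..} (\<lambda>x. gamma_weight lam mu x * poly q x)"
    and set_integral_gamma_weight_poly:
      "(LINT x:{0<..}|lborel. gamma_weight lam mu x * poly q x) = moment_functional lam mu q"
proof -
  have eq: "gamma_weight lam mu x * poly q x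
      = (\<Sum>i\<le>degree q. coeff q i * (gamma_weight lam mu x * x ^ i))" for x
    by (simp add: poly_altdef sum_distrib_left mult_ac)
  have terms: "set_integrable lborel {0<..} (\<lambda>x. coeff q i * (gamma_weight lam mu x * x ^ i))" for i
    using set_integrable_gamma_weight_power[OF lam mu, of i] by simp
  show "set_integrable lborel {0<..} (\<lambda>x. gamma_weight lam mu x * poly q x)"
    unfolding eq by (rule set_integrable_sum[OF terms])
  show "(LINT x:{0<..}|lborel. gamma_weight lam mu x * poly q x) = moment_functional lam mu q"
    unfolding eq set_integral_sum[OF terms] moment_functional_def
    by (simp add: set_integral_gamma_weight_power[OF lam mu])
qed

lemma moment_functional_eq_sum:
  assumes "degree q \<le> n"
  shows "moment_functional lam mu q = (\<Sum>i\<le>n. coeff q i * gamma_moment lam mu i)"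
  unfolding moment_functional_def using assms
  by (intro sum.mono_neutral_left) (auto simp: coeff_eq_0)

lemma moment_functional_add:
  "moment_functional lam mu (p + q) = moment_functional lam mu p + moment_functional lam mu q"
proof -
  define n where "n = max (degree p) (degree q)"
  have "degree (p + q) \<le> n" "degree p \<le> n" "degree q \<le> n"
    by (simp_all add: n_def degree_add_le)
  then show ?thesis
    by (simp add: moment_functional_eq_sum distrib_right sum.distrib)
qed

lemma moment_functional_smult: "moment_functional lam mu (smult c p) = c * moment_functional lam mu p"
  using moment_functional_eq_sum[OF degree_smult_le, of lam mu c p]
  by (simp add: moment_functional_def sum_distrib_left mult.assoc)

lemma moment_functional_0: "moment_functional lam mu 0 = 0"
  by (simp add: moment_functional_def)

lemma moment_functional_sum:
  "moment_functional lam mu (\<Sum>i\<in>A. f i) = (\<Sum>i\<in>A. moment_functional lam mu (f i))"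
  by (induction A rule: infinite_finite_induct) (simp_all add: moment_functional_0 moment_functional_add)

lemma moment_functional_monom: "moment_functional lam mu (monom c i) = c * gamma_moment lam mu i"
proof (cases "c = 0")
  case False
  then have "moment_functional lam mu (monom c i)
      = (\<Sum>j\<le>i. if j = i then c * gamma_moment lam mu j else 0)"
    unfolding moment_functional_def by (intro sum.cong) (auto simp: degree_monom_eq)
  then show ?thesis
    by simp
qed (simp add: moment_functional_def)

lemma moment_functional_quadratic:
  assumes lam: "lam > 0" and mu: "mu > 0"
  shows "moment_functional lam mu [:a, b, c:]
      = (a + b * mu / lam + c * mu * (mu + 1) / lam ^ 2) * gamma_moment lam mu 0"
proof -
  have "[:a, b, c:] = monom a 0 + monom b 1 + monom c 2"
    by (simp add: monom_Suc monom_0 numeral_2_eq_2)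
  then show ?thesis
    using lam
    by (simp add: moment_functional_add moment_functional_monom numeral_2_eq_2
        gamma_moment_Suc[OF lam mu] field_simps power2_eq_square)
qed

section \<open>Bivariate polynomials\<close>

text \<open>A bivariate polynomial is a \<open>real poly poly\<close>: the outer variable is \<open>t\<close>, the
  coefficients are polynomials in \<open>x\<close>, and \<open>poly (poly p [:t:]) x\<close> is its value at \<open>(t, x)\<close>.\<close>

lemma poly_poly_const:
  "poly (poly (p :: 'a :: comm_ring_1 poly poly) [:t:]) x = (\<Sum>n\<le>degree p. poly (coeff p n) x * t ^ n)"
proof -
  have "poly p [:t:] = (\<Sum>n\<le>degree p. coeff p n * [:t:] ^ n)"
    by (simp add: poly_altdef)
  then show ?thesis
    by (simp add: poly_sum poly_power)
qed

lemma moment_functional_poly_const: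
  "moment_functional lam mu (poly p [:t:])
      = (\<Sum>n\<le>degree p. moment_functional lam mu (coeff p n) * t ^ n)"
proof -
  have "poly p [:t:] = (\<Sum>n\<le>degree p. smult (t ^ n) (coeff p n))"
    by (simp add: poly_altdef poly_const_pow)
  then show ?thesis
    by (simp add: moment_functional_sum moment_functional_smult mult.commute)
qed

lemma abs_poly_le_one_plus_power:
  assumes "x \<ge> (0::real)"
  shows "\<bar>poly q x\<bar> \<le> (\<Sum>i\<le>degree q. \<bar>coeff q i\<bar>) * (1 + x) ^ degree q"
proof -
  have "\<bar>poly q x\<bar> \<le> (\<Sum>i\<le>degree q. \<bar>coeff q i * x ^ i\<bar>)"
    unfolding poly_altdef by (rule sum_abs)
  also have "\<dots> \<le> (\<Sum>i\<le>degree q. \<bar>coeff q i\<bar> * (1 + x) ^ degree q)"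
  proof (rule sum_mono)
    fix i assume "i \<in> {..degree q}"
    then have "x ^ i \<le> (1 + x) ^ degree q"
      using assms order.trans[OF power_mono[of x "1 + x" i] power_increasing[of i "degree q" "1 + x"]]
      by simp
    then show "\<bar>coeff q i * x ^ i\<bar> \<le> \<bar>coeff q i\<bar> * (1 + x) ^ degree q"
      using assms by (simp add: abs_mult mult_left_mono)
  qed
  finally show ?thesis
    by (simp add: sum_distrib_right)
qed

lemma poly_poly_bounded_on_unit_interval:
  fixes p :: "real poly poly"
  obtains C M where "\<And>x t. x \<ge> 0 \<Longrightarrow> t \<in> {0..1} \<Longrightarrow> \<bar>poly (poly p [:t:]) x\<bar> \<le> C * (1 + x) ^ M"
proof
  define M where "M = Max (degree ` coeff p ` {..degree p})"
  define S where "S n = (\<Sum>i\<le>degree (coeff p n). \<bar>coeff (coeff p n) i\<bar>)" for n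
  fix x t :: real
  assume x: "x \<ge> 0" and t: "t \<in> {0..1}"
  have "\<bar>poly (poly p [:t:]) x\<bar> \<le> (\<Sum>n\<le>degree p. \<bar>poly (coeff p n) x * t ^ n\<bar>)"
    unfolding poly_poly_const by (rule sum_abs)
  also have "\<dots> \<le> (\<Sum>n\<le>degree p. S n * (1 + x) ^ M)"
  proof (rule sum_mono)
    fix n assume n: "n \<in> {..degree p}"
    have "degree (coeff p n) \<le> M"
      unfolding M_def using n by (intro Max_ge) auto
    then have "(1 + x) ^ degree (coeff p n) \<le> (1 + x) ^ M"
      using x by (intro power_increasing) auto
    then have "S n * (1 + x) ^ degree (coeff p n) \<le> S n * (1 + x) ^ M"
      by (intro mult_left_mono) (simp_all add: S_def sum_nonneg)
    then have "\<bar>poly (coeff p n) x\<bar> \<le> S n * (1 + x) ^ M"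
      using abs_poly_le_one_plus_power[OF x, of "coeff p n"] unfolding S_def by linarith
    moreover have "\<bar>poly (coeff p n) x\<bar> * \<bar>t ^ n\<bar> \<le> \<bar>poly (coeff p n) x\<bar>"
      using t by (intro mult_left_le) (simp_all add: power_le_one)
    ultimately show "\<bar>poly (coeff p n) x * t ^ n\<bar> \<le> S n * (1 + x) ^ M"
      unfolding abs_mult by linarith
  qed
  finally show "\<bar>poly (poly p [:t:]) x\<bar> \<le> (\<Sum>n\<le>degree p. S n) * (1 + x) ^ M"
    by (simp add: sum_distrib_right)
qed

lemma abs_sum_power_tail_le:
  fixes c :: "nat \<Rightarrow> real"
  assumes t: "0 \<le> t" "t \<le> 1" and c: "\<And>n. n > d \<Longrightarrow> c n = 0"
  shows "\<bar>(\<Sum>n\<le>d. c n * t ^ n) - (\<Sum>n<N. c n * t ^ n)\<bar> \<le> (\<Sum>n\<le>d. \<bar>c n\<bar>) * t ^ N"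
proof -
  have "(\<Sum>n\<le>d. c n * t ^ n) = (\<Sum>n\<in>{..<N} \<union> {N..d}. c n * t ^ n)"
  proof (rule sum.mono_neutral_left)
    show "{..d} \<subseteq> {..<N} \<union> {N..d}"
      by auto
    show "\<forall>n\<in>{..<N} \<union> {N..d} - {..d}. c n * t ^ n = 0"
      using c by auto
  qed auto
  also have "\<dots> = (\<Sum>n<N. c n * t ^ n) + (\<Sum>n=N..d. c n * t ^ n)"
    by (rule sum.union_disjoint) auto
  finally have "\<bar>(\<Sum>n\<le>d. c n * t ^ n) - (\<Sum>n<N. c n * t ^ n)\<bar> = \<bar>\<Sum>n=N..d. c n * t ^ n\<bar>"
    by simp
  also have "\<dots> \<le> (\<Sum>n=N..d. \<bar>c n\<bar> * t ^ N)"
  proof (rule order.trans[OF sum_abs sum_mono])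
    fix n assume "n \<in> {N..d}"
    then have "t ^ n \<le> t ^ N"
      using t by (intro power_decreasing) auto
    then show "\<bar>c n * t ^ n\<bar> \<le> \<bar>c n\<bar> * t ^ N"
      using t by (simp add: abs_mult mult_left_mono)
  qed
  also have "\<dots> \<le> (\<Sum>n\<le>d. \<bar>c n\<bar>) * t ^ N"
    unfolding sum_distrib_right[symmetric] using t
    by (intro mult_right_mono sum_mono2) auto
  finally show ?thesis .
qed

section \<open>Remainders of the binomial series\<close>

lemma abs_gbinomial_le:
  assumes "a \<ge> (0::real)"
  shows "\<bar>a gchoose j\<bar> \<le> (a + 1) ^ j"
proof -
  have "\<bar>\<Prod>i=0..<j. a - of_nat i\<bar> = (\<Prod>i=0..<j. \<bar>a - of_nat i\<bar>)"
    using prod_norm[of "\<lambda>i. a - of_nat i" "{0..<j}"] by simp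
  also have "\<dots> \<le> (\<Prod>i=0..<j. (a + 1) * of_nat (Suc i))"
  proof (rule prod_mono)
    fix i assume "i \<in> {0..<j}"
    have "\<bar>a - of_nat i\<bar> \<le> a + of_nat i"
      using assms by simp
    also have "\<dots> \<le> (a + 1) * of_nat (Suc i)"
      using assms by (simp add: algebra_simps)
    finally show "0 \<le> \<bar>a - of_nat i\<bar> \<and> \<bar>a - of_nat i\<bar> \<le> (a + 1) * of_nat (Suc i)"
      by simp
  qed
  also have "\<dots> = (a + 1) ^ j * fact j"
    by (simp add: prod.distrib fact_prod_Suc)
  finally show ?thesis
    by (simp add: gbinomial_prod_rev abs_divide divide_le_eq)
qed

lemma gen_binomial_remainder_small:
  fixes kap z :: real
  assumes kap: "kap \<ge> 0" and z: "(kap + 1) * \<bar>z\<bar> \<le> 1 / 2"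
  shows "\<bar>(1 + z) powr kap - (\<Sum>j<N. (kap gchoose j) * z ^ j)\<bar> \<le> 2 * ((kap + 1) * \<bar>z\<bar>) ^ N"
proof -
  define q where "q = (kap + 1) * \<bar>z\<bar>"
  define g where "g n = (kap gchoose n) * z ^ n" for n
  have q: "0 \<le> q" "q \<le> 1 / 2"
    using kap z by (auto simp: q_def)
  have "\<bar>z\<bar> \<le> q"
    using kap by (simp add: q_def mult_le_cancel_right1)
  then have "(\<lambda>i. g (i + N)) sums ((1 + z) powr kap - (\<Sum>j<N. g j))"
    using q unfolding g_def by (intro sums_split_initial_segment gen_binomial_real) auto
  then have tail: "(1 + z) powr kap - (\<Sum>j<N. g j) = (\<Sum>i. g (i + N))"
    by (simp add: sums_iff)
  have term_le: "\<bar>g (i + N)\<bar> \<le> q ^ N * q ^ i" for i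
  proof -
    have "\<bar>g (i + N)\<bar> = \<bar>kap gchoose (i + N)\<bar> * \<bar>z\<bar> ^ (i + N)"
      by (simp add: g_def abs_mult power_abs)
    also have "\<dots> \<le> (kap + 1) ^ (i + N) * \<bar>z\<bar> ^ (i + N)"
      by (intro mult_right_mono abs_gbinomial_le kap) auto
    also have "\<dots> = q ^ N * q ^ i"
      by (simp add: q_def power_mult_distrib power_add)
    finally show ?thesis .
  qed
  have geometric: "summable (\<lambda>i. q ^ N * q ^ i)"
    using q by (intro summable_mult summable_geometric) auto
  have "summable (\<lambda>i. \<bar>g (i + N)\<bar>)"
    by (rule summable_comparison_test'[OF geometric]) (use term_le in auto)
  then have "\<bar>(1 + z) powr kap - (\<Sum>j<N. g j)\<bar> \<le> (\<Sum>i. q ^ N * q ^ i)"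
    unfolding tail by (intro order.trans[OF summable_rabs suminf_le] term_le geometric)
  also have "\<dots> = q ^ N * (1 / (1 - q))"
    using q by (simp add: suminf_mult summable_geometric suminf_geometric)
  also have "\<dots> \<le> q ^ N * 2"
    using q by (intro mult_left_mono) (auto simp: field_simps)
  finally show ?thesis
    by (simp add: g_def q_def mult.commute)
qed

lemma abs_binomial_partial_sum_le:
  fixes kap e :: real
  assumes "kap \<ge> 0"
  shows "\<bar>\<Sum>j<N. (kap gchoose j) * e ^ j\<bar> \<le> real N * (kap + 1) ^ N * (1 + \<bar>e\<bar>) ^ N"
proof -
  have "\<bar>(kap gchoose j) * e ^ j\<bar> \<le> (kap + 1) ^ N * (1 + \<bar>e\<bar>) ^ N" if "j < N" for j
  proof -
    have "\<bar>kap gchoose j\<bar> \<le> (kap + 1) ^ N"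
      using abs_gbinomial_le[OF assms, of j] power_increasing[of j N "kap + 1"] that assms by simp
    moreover have "\<bar>e\<bar> ^ j \<le> (1 + \<bar>e\<bar>) ^ N"
      using order.trans[OF power_mono[of "\<bar>e\<bar>" "1 + \<bar>e\<bar>" j] power_increasing[of j N "1 + \<bar>e\<bar>"]] that
      by simp
    ultimately show ?thesis
      by (simp add: abs_mult power_abs mult_mono)
  qed
  then have "\<bar>\<Sum>j<N. (kap gchoose j) * e ^ j\<bar> \<le> (\<Sum>j<N. (kap + 1) ^ N * (1 + \<bar>e\<bar>) ^ N)"
    by (intro order.trans[OF sum_abs sum_mono]) auto
  then show ?thesis
    by simp
qed

lemma abs_powr_le_one_plus_power:
  fixes kap e :: real
  assumes "kap \<ge> 0"
  shows "\<bar>1 + e\<bar> powr kap \<le> (1 + \<bar>e\<bar>) ^ nat \<lceil>kap\<rceil>"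
proof (cases "1 + e = 0")
  case False
  have "\<bar>1 + e\<bar> powr kap \<le> (1 + \<bar>e\<bar>) powr kap"
    using False assms by (intro powr_mono2) auto
  also have "\<dots> \<le> (1 + \<bar>e\<bar>) powr real (nat \<lceil>kap\<rceil>)"
    by (intro powr_mono) (auto simp: real_nat_ceiling_ge)
  finally show ?thesis
    by (simp add: powr_realpow)
qed simp

lemma abs_powr_binomial_remainder_le:
  fixes kap :: real
  assumes kap: "kap > 0"
  obtains K where "K \<ge> 0"
    and "\<And>e. \<bar>\<bar>1 + e\<bar> powr kap - (\<Sum>j<N. (kap gchoose j) * e ^ j)\<bar>
                \<le> K * \<bar>e\<bar> ^ N * (1 + \<bar>e\<bar>) ^ nat \<lceil>kap\<rceil>"
proof
  define d where "d = 1 / (2 * (kap + 1))"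
  define \<rho> where "\<rho> = (1 + d) / d"
  define K where "K = 2 * (kap + 1) ^ N + \<rho> ^ N + real N * (kap + 1) ^ N * \<rho> ^ N"
  have d: "d > 0"
    using kap by (simp add: d_def)
  have K_parts: "0 \<le> 2 * (kap + 1) ^ N" "0 \<le> \<rho> ^ N" "0 \<le> real N * (kap + 1) ^ N * \<rho> ^ N"
    using d kap by (auto simp: \<rho>_def)
  then show K: "K \<ge> 0"
    by (simp add: K_def)
  fix e :: real
  define P where "P = (\<Sum>j<N. (kap gchoose j) * e ^ j)"
  define E where "E = (1 + \<bar>e\<bar>) ^ nat \<lceil>kap\<rceil>"
  have E: "1 \<le> E"
    by (simp add: E_def)
  show "\<bar>\<bar>1 + e\<bar> powr kap - P\<bar> \<le> K * \<bar>e\<bar> ^ N * E"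
  proof (cases "\<bar>e\<bar> \<le> d")
    case True
    then have small: "(kap + 1) * \<bar>e\<bar> \<le> 1 / 2"
      using kap by (simp add: d_def field_simps)
    moreover have "d \<le> 1 / 2"
      using kap by (simp add: d_def)
    then have "\<bar>e\<bar> \<le> 1 / 2"
      using True by linarith
    ultimately have "\<bar>\<bar>1 + e\<bar> powr kap - P\<bar> \<le> 2 * (kap + 1) ^ N * \<bar>e\<bar> ^ N"
      using gen_binomial_remainder_small[of kap e N] kap
      by (simp add: P_def power_mult_distrib abs_if split: if_splits)
    also have "\<dots> \<le> K * \<bar>e\<bar> ^ N"
      using K_parts by (intro mult_right_mono) (auto simp: K_def)
    also have "\<dots> \<le> K * \<bar>e\<bar> ^ N * E"
      using mult_left_mono[OF E, of "K * \<bar>e\<bar> ^ N"] K by simp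
    finally show ?thesis .
  next
    case False
    then have "1 + \<bar>e\<bar> \<le> \<rho> * \<bar>e\<bar>" and "1 \<le> \<rho> * \<bar>e\<bar>"
      using d by (simp_all add: \<rho>_def field_simps add_increasing2)
    then have large: "(1 + \<bar>e\<bar>) ^ N \<le> \<rho> ^ N * \<bar>e\<bar> ^ N" "1 \<le> \<rho> ^ N * \<bar>e\<bar> ^ N"
      using power_mono[of "1 + \<bar>e\<bar>" "\<rho> * \<bar>e\<bar>" N] one_le_power[of "\<rho> * \<bar>e\<bar>" N]
      by (simp_all add: power_mult_distrib)
    have "\<bar>1 + e\<bar> powr kap \<le> 1 * E"
      using abs_powr_le_one_plus_power[of kap e] kap by (simp add: E_def)
    also have "\<dots> \<le> \<rho> ^ N * \<bar>e\<bar> ^ N * E"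
      using large(2) E by (intro mult_right_mono) auto
    finally have powr_le: "\<bar>1 + e\<bar> powr kap \<le> \<rho> ^ N * \<bar>e\<bar> ^ N * E" .
    have "\<bar>P\<bar> \<le> real N * (kap + 1) ^ N * (1 + \<bar>e\<bar>) ^ N"
      unfolding P_def using kap by (intro abs_binomial_partial_sum_le) simp
    also have "\<dots> \<le> real N * (kap + 1) ^ N * (\<rho> ^ N * \<bar>e\<bar> ^ N)"
      using large(1) kap by (intro mult_left_mono) auto
    also have "\<dots> \<le> real N * (kap + 1) ^ N * \<rho> ^ N * \<bar>e\<bar> ^ N * E"
      using mult_left_mono[OF E, of "real N * (kap + 1) ^ N * \<rho> ^ N * \<bar>e\<bar> ^ N"] kap d
      by (simp add: mult_ac \<rho>_def)
    finally have P_le: "\<bar>P\<bar> \<le> real N * (kap + 1) ^ N * \<rho> ^ N * \<bar>e\<bar> ^ N * E" .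
    have "\<bar>\<bar>1 + e\<bar> powr kap - P\<bar> \<le> \<bar>1 + e\<bar> powr kap + \<bar>P\<bar>"
      by (simp add: abs_triangle_ineq4 [THEN order.trans])
    also have "\<dots> \<le> (\<rho> ^ N + real N * (kap + 1) ^ N * \<rho> ^ N) * \<bar>e\<bar> ^ N * E"
      using powr_le P_le by (simp add: algebra_simps)
    also have "\<dots> \<le> K * \<bar>e\<bar> ^ N * E"
      using K_parts E by (intro mult_right_mono) (auto simp: K_def)
    finally show ?thesis .
  qed
qed

section \<open>Expansion of weighted integrals of powers of bivariate polynomials\<close>

lemma borel_measurable_poly [measurable]:
  assumes [measurable]: "f \<in> borel_measurable M"
  shows "(\<lambda>x. poly (q :: real poly) (f x)) \<in> borel_measurable M"
proof -
  have "poly q \<in> borel_measurable borel"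
    by (intro borel_measurable_continuous_onI continuous_on_poly continuous_on_id)
  then show ?thesis
    by (rule measurable_compose[rotated]) simp
qed

lemma coeff_power_eq_0_below:
  fixes q :: "'a :: comm_semiring_1 poly"
  assumes "coeff q 0 = 0" "n < j"
  shows "coeff (q ^ j) n = 0"
  using assms(2)
proof (induction j arbitrary: n)
  case (Suc j)
  obtain r where q: "q = pCons 0 r"
    using assms(1) by (cases q) auto
  have "coeff (r * q ^ j) (n - 1) = 0" if "n > 0"
    unfolding coeff_mult using Suc that by (intro sum.neutral) auto
  then show ?case
    by (cases n) (simp_all add: q)
qed simp

definition binomial_truncation :: "real \<Rightarrow> real poly poly \<Rightarrow> nat \<Rightarrow> real poly poly" where
  "binomial_truncation kap p N = (\<Sum>j<N. smult [:kap gchoose j:] ((p - 1) ^ j))"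

lemma poly_binomial_truncation:
  "poly (poly (binomial_truncation kap p N) [:t:]) x
     = (\<Sum>j<N. (kap gchoose j) * (poly (poly p [:t:]) x - 1) ^ j)"
  by (simp add: binomial_truncation_def poly_sum poly_power)

lemma coeff_binomial_truncation_stable:
  assumes "coeff p 0 = 1" "n < N"
  shows "coeff (binomial_truncation kap p N) n = coeff (binomial_truncation kap p (Suc n)) n"
proof -
  have "coeff (binomial_truncation kap p N) n = (\<Sum>j<N. [:kap gchoose j:] * coeff ((p - 1) ^ j) n)"
    by (simp add: binomial_truncation_def coeff_sum)
  also have "\<dots> = (\<Sum>j<Suc n. [:kap gchoose j:] * coeff ((p - 1) ^ j) n)"
    using assms by (intro sum.mono_neutral_right) (auto simp: coeff_power_eq_0_below)
  also have "\<dots> = coeff (binomial_truncation kap p (Suc n)) n"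
    by (simp add: binomial_truncation_def coeff_sum)
  finally show ?thesis .
qed

text \<open>Since \<open>p(0, x) = 1\<close>, \<open>p(t, x) - 1 = t q(t, x)\<close> with \<open>q\<close> polynomially bounded in \<open>x\<close>
  for \<open>0 \<le> t \<le> 1\<close>.\<close>

lemma abs_powr_binomial_truncation_error_le:
  fixes p :: "real poly poly"
  assumes p: "coeff p 0 = 1" and kap: "kap > 0"
  obtains B G where "\<And>x t. x \<ge> 0 \<Longrightarrow> t \<in> {0..1} \<Longrightarrow>
    \<bar>\<bar>poly (poly p [:t:]) x\<bar> powr kap - poly (poly (binomial_truncation kap p N) [:t:]) x\<bar>
      \<le> B * t ^ N * (1 + x) ^ G"
proof -
  obtain q where q: "p - 1 = pCons 0 q"
    using p by (cases "p - 1") (auto simp: coeff_diff dest: arg_cong[of _ _ "\<lambda>p. coeff p 0"])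
  obtain C M where C: "\<And>x t. x \<ge> 0 \<Longrightarrow> t \<in> {0..1} \<Longrightarrow> \<bar>poly (poly q [:t:]) x\<bar> \<le> C * (1 + x) ^ M"
    using poly_poly_bounded_on_unit_interval by blast
  have "C \<ge> 0"
    using C[of 0 0] by simp
  define k where "k = nat \<lceil>kap\<rceil>"
  obtain K where "K \<ge> 0"
    and K: "\<And>e. \<bar>\<bar>1 + e\<bar> powr kap - (\<Sum>j<N. (kap gchoose j) * e ^ j)\<bar> \<le> K * \<bar>e\<bar> ^ N * (1 + \<bar>e\<bar>) ^ k"
    using abs_powr_binomial_remainder_le[OF kap] unfolding k_def by blast
  show thesis
  proof
    fix x t :: real
    assume x: "x \<ge> 0" and t: "t \<in> {0..1}"
    define e where "e = poly (poly p [:t:]) x - 1"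
    have "e = t * poly (poly q [:t:]) x"
      using arg_cong[OF q, of "\<lambda>p. poly (poly p [:t:]) x"] by (simp add: e_def)
    then have e: "\<bar>e\<bar> \<le> t * (C * (1 + x) ^ M)"
      using C[OF x t] t by (simp add: abs_mult mult_left_mono)
    also have "t * (C * (1 + x) ^ M) \<le> C * (1 + x) ^ M"
      using t \<open>C \<ge> 0\<close> x by (intro mult_left_le_one_le) auto
    finally have "\<bar>e\<bar> \<le> C * (1 + x) ^ M" .
    moreover have "1 \<le> (1 + x) ^ M"
      using x by simp
    ultimately have "1 + \<bar>e\<bar> \<le> (1 + C) * (1 + x) ^ M"
      by (simp add: algebra_simps)
    then have "(1 + \<bar>e\<bar>) ^ k \<le> (1 + C) ^ k * (1 + x) ^ (M * k)"
      using power_mono[of "1 + \<bar>e\<bar>" "(1 + C) * (1 + x) ^ M" k]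
      by (simp add: power_mult_distrib power_mult)
    moreover have "\<bar>e\<bar> ^ N \<le> t ^ N * C ^ N * (1 + x) ^ (M * N)"
      using power_mono[OF e, of N] by (simp add: power_mult_distrib power_mult)
    ultimately have "K * \<bar>e\<bar> ^ N * (1 + \<bar>e\<bar>) ^ k
        \<le> K * (t ^ N * C ^ N * (1 + x) ^ (M * N)) * ((1 + C) ^ k * (1 + x) ^ (M * k))"
      using \<open>K \<ge> 0\<close> \<open>C \<ge> 0\<close> t x by (intro mult_mono mult_left_mono) auto
    also have "\<dots> = (K * C ^ N * (1 + C) ^ k) * t ^ N * (1 + x) ^ (M * N + M * k)"
      by (simp add: power_add mult_ac)
    finally show "\<bar>\<bar>poly (poly p [:t:]) x\<bar> powr kap - poly (poly (binomial_truncation kap p N) [:t:]) x\<bar>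
        \<le> (K * C ^ N * (1 + C) ^ k) * t ^ N * (1 + x) ^ (M * N + M * k)"
      using K[of e] unfolding poly_binomial_truncation e_def by simp
  qed
qed

lemma
  assumes lam: "lam > 0" and mu: "mu > 0" and f: "f \<in> borel_measurable borel"
    and f_le: "\<And>x. x > 0 \<Longrightarrow> \<bar>f x\<bar> \<le> B * (1 + x) ^ G"
  shows set_integrable_gamma_weight_bounded: "set_integrable lborel {0<..} (\<lambda>x. gamma_weight lam mu x * f x)"
    and abs_set_integral_gamma_weight_le:
      "\<bar>LINT x:{0<..}|lborel. gamma_weight lam mu x * f x\<bar> \<le> B * moment_functional lam mu ([:1, 1:] ^ G)"
proof -
  define bound where "bound x = B * (gamma_weight lam mu x * (1 + x) ^ G)" for x
  have bound: "set_integrable lborel {0<..} bound"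
    "(LINT x:{0<..}|lborel. bound x) = B * moment_functional lam mu ([:1, 1:] ^ G)"
    unfolding bound_def
    using set_integrable_gamma_weight_poly[OF lam mu, of "[:1, 1:] ^ G"]
      set_integral_gamma_weight_poly[OF lam mu, of "[:1, 1:] ^ G"]
    by (simp_all add: poly_power)
  have le: "\<bar>gamma_weight lam mu x * f x\<bar> \<le> bound x" if "x \<in> {0<..}" for x
    using f_le[of x] that
    by (simp add: bound_def abs_mult gamma_weight_nonneg mult_left_mono mult.left_commute[of B])
  note f [measurable]
  have "set_borel_measurable lborel {0<..} (\<lambda>x. gamma_weight lam mu x * f x)"
    unfolding set_borel_measurable_def gamma_weight_def by measurable
  then show int: "set_integrable lborel {0<..} (\<lambda>x. gamma_weight lam mu x * f x)"
    using le by (intro set_integrable_bound[OF bound(1)]) (auto intro!: AE_I2 order.trans[OF _ abs_ge_self])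
  have "\<bar>LINT x:{0<..}|lborel. gamma_weight lam mu x * f x\<bar>
      \<le> (LINT x:{0<..}|lborel. \<bar>gamma_weight lam mu x * f x\<bar>)"
    using set_integral_norm_bound[OF int] by simp
  also have "\<dots> \<le> B * moment_functional lam mu ([:1, 1:] ^ G)"
    unfolding bound(2)[symmetric] using le by (intro set_integral_mono set_integrable_abs int bound(1))
  finally show "\<bar>LINT x:{0<..}|lborel. gamma_weight lam mu x * f x\<bar> \<le> B * moment_functional lam mu ([:1, 1:] ^ G)" .
qed

lemma weighted_powr_integral_expansion:
  fixes p :: "real poly poly"
  assumes lam: "lam > 0" and mu: "mu > 0" and kap: "kap > 0" and p: "coeff p 0 = 1"
  obtains C where "\<And>t. t \<in> {0..1} \<Longrightarrow>
    \<bar>(LINT x:{0<..}|lborel. gamma_weight lam mu x * \<bar>poly (poly p [:t:]) x\<bar> powr kap)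
      - (\<Sum>n<N. moment_functional lam mu (coeff (binomial_truncation kap p N) n) * t ^ n)\<bar>
    \<le> C * t ^ N"
proof -
  define T where "T = binomial_truncation kap p N"
  obtain B G where err: "\<And>x t. x \<ge> 0 \<Longrightarrow> t \<in> {0..1} \<Longrightarrow>
      \<bar>\<bar>poly (poly p [:t:]) x\<bar> powr kap - poly (poly T [:t:]) x\<bar> \<le> B * t ^ N * (1 + x) ^ G"
    using abs_powr_binomial_truncation_error_le[OF p kap] unfolding T_def by blast
  define S where "S = (\<Sum>n\<le>degree T. \<bar>moment_functional lam mu (coeff T n)\<bar>)"
  define U where "U = moment_functional lam mu ([:1, 1:] ^ G)"
  have "\<bar>(LINT x:{0<..}|lborel. gamma_weight lam mu x * \<bar>poly (poly p [:t:]) x\<bar> powr kap)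
      - (\<Sum>n<N. moment_functional lam mu (coeff T n) * t ^ n)\<bar> \<le> (S + B * U) * t ^ N"
    if t: "t \<in> {0..1}" for t
  proof -
    define f where "f x = \<bar>poly (poly p [:t:]) x\<bar> powr kap - poly (poly T [:t:]) x" for x
    have f: "f \<in> borel_measurable borel"
      unfolding f_def by measurable
    have f_le: "\<bar>f x\<bar> \<le> B * t ^ N * (1 + x) ^ G" if "x > 0" for x
      using err[of x t] that t by (simp add: f_def)
    have "\<bar>(LINT x:{0<..}|lborel. gamma_weight lam mu x * poly (poly T [:t:]) x)
        - (\<Sum>n<N. moment_functional lam mu (coeff T n) * t ^ n)\<bar> \<le> S * t ^ N"
      unfolding set_integral_gamma_weight_poly[OF lam mu] moment_functional_poly_const S_def
      using t by (intro abs_sum_power_tail_le) (auto simp: coeff_eq_0 moment_functional_0)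
    moreover have "\<bar>LINT x:{0<..}|lborel. gamma_weight lam mu x * f x\<bar> \<le> B * t ^ N * U"
      unfolding U_def by (rule abs_set_integral_gamma_weight_le[OF lam mu f f_le])
    moreover have "gamma_weight lam mu x * \<bar>poly (poly p [:t:]) x\<bar> powr kap
        = gamma_weight lam mu x * poly (poly T [:t:]) x + gamma_weight lam mu x * f x" for x
      by (simp add: f_def algebra_simps)
    then have "(LINT x:{0<..}|lborel. gamma_weight lam mu x * \<bar>poly (poly p [:t:]) x\<bar> powr kap)
        = (LINT x:{0<..}|lborel. gamma_weight lam mu x * poly (poly T [:t:]) x)
          + (LINT x:{0<..}|lborel. gamma_weight lam mu x * f x)"
      by (simp add: set_integral_add(2) set_integrable_gamma_weight_poly[OF lam mu]
          set_integrable_gamma_weight_bounded[OF lam mu f f_le])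
    ultimately show ?thesis
      by (simp add: algebra_simps)
  qed
  then show thesis
    using that unfolding T_def by blast
qed

definition expansion_coeff :: "real \<Rightarrow> real \<Rightarrow> real \<Rightarrow> real poly poly \<Rightarrow> nat \<Rightarrow> real" where
  "expansion_coeff lam kap mu p n =
     moment_functional lam mu (coeff (binomial_truncation kap p (Suc n)) n) / gamma_moment lam mu 0"

lemma weighted_powr_integral_asymptotics:
  fixes p :: "real poly poly"
  assumes lam: "lam > 0" and mu: "mu > 0" and kap: "kap > 0" and p: "coeff p 0 = 1"
  shows "\<exists>r :: real \<Rightarrow> real. r \<in> O[at_top](\<lambda>a. a powr - real N) \<and>
    (\<forall>\<^sub>F a in at_top.
       (LINT x:{0<..}|lborel. gamma_weight lam mu x * \<bar>poly (poly p [:1 / a:]) x\<bar> powr kap)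
         = gamma_moment lam mu 0 * ((\<Sum>k<N. expansion_coeff lam kap mu p k / a ^ k) + r a))"
proof -
  define M where "M = gamma_moment lam mu 0"
  define F where "F t = (LINT x:{0<..}|lborel. gamma_weight lam mu x * \<bar>poly (poly p [:t:]) x\<bar> powr kap)"
    for t
  define r where "r a = F (1 / a) / M - (\<Sum>k<N. expansion_coeff lam kap mu p k / a ^ k)" for a
  have M: "M > 0"
    using gamma_moment_pos[OF lam mu] by (simp add: M_def)
  obtain C where C: "\<And>t. t \<in> {0..1} \<Longrightarrow>
      \<bar>F t - (\<Sum>n<N. moment_functional lam mu (coeff (binomial_truncation kap p N) n) * t ^ n)\<bar> \<le> C * t ^ N"
    using weighted_powr_integral_expansion[OF lam mu kap p] unfolding F_def by blast
  have "\<bar>r a\<bar> \<le> C / M * a powr - real N" if a: "a \<ge> 1" for a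
  proof -
    define Q where "Q = (\<Sum>n<N. moment_functional lam mu (coeff (binomial_truncation kap p N) n) * (1 / a) ^ n)"
    have "(\<Sum>k<N. expansion_coeff lam kap mu p k / a ^ k) = Q / M"
      unfolding sum_divide_distrib Q_def
    proof (intro sum.cong refl)
      fix k assume "k \<in> {..<N}"
      then show "expansion_coeff lam kap mu p k / a ^ k
          = moment_functional lam mu (coeff (binomial_truncation kap p N) k) * (1 / a) ^ k / M"
        using coeff_binomial_truncation_stable[OF p, of k N]
        by (simp add: expansion_coeff_def M_def power_one_over mult.commute)
    qed
    then have "\<bar>r a\<bar> = \<bar>F (1 / a) - Q\<bar> / M"
      using M by (simp add: r_def flip: diff_divide_distrib)
    also have "\<dots> \<le> C * (1 / a) ^ N / M"
      using C[of "1 / a"] a M unfolding Q_def by (intro divide_right_mono) auto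
    also have "(1 / a) ^ N = a powr - real N"
      using a by (simp add: powr_minus powr_realpow power_one_over divide_inverse power_inverse)
    finally show ?thesis
      by simp
  qed
  then have "r \<in> O[at_top](\<lambda>a. a powr - real N)"
    by (intro bigoI[where c = "C / M"] eventually_mono[OF eventually_ge_at_top[of 1]]) auto
  moreover have "\<forall>\<^sub>F a in at_top. F (1 / a) = M * ((\<Sum>k<N. expansion_coeff lam kap mu p k / a ^ k) + r a)"
    using M by (simp add: r_def)
  ultimately show ?thesis
    unfolding F_def M_def by blast
qed

lemma coeff_binomial_truncation_1: "coeff (binomial_truncation kap p 2) 1 = smult kap (coeff p 1)"
  by (simp add: binomial_truncation_def numeral_2_eq_2)

lemma coeff_binomial_truncation_2:
  assumes "coeff p 0 = 1"
  shows "coeff (binomial_truncation kap p 3) 2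
    = smult kap (coeff p 2) + smult (kap * (kap - 1) / 2) (coeff p 1 ^ 2)"
proof -
  have "coeff (binomial_truncation kap p 3) 2
      = smult kap (coeff p 2) + smult (kap gchoose 2) (coeff ((p - 1) ^ 2) 2)"
    by (simp add: binomial_truncation_def numeral_3_eq_3 numeral_2_eq_2 power2_eq_square)
  also have "coeff ((p - 1) ^ 2) 2 = coeff p 1 ^ 2"
    using assms by (simp add: power2_eq_square coeff_mult numeral_2_eq_2 atMost_Suc)
  also have "kap gchoose 2 = kap * (kap - 1) / 2"
    by (simp add: gbinomial_prod_rev numeral_2_eq_2 atLeast0_lessThan_Suc)
  finally show ?thesis .
qed

lemma expansion_coeff_0:
  assumes "lam > 0" "mu > 0"
  shows "expansion_coeff lam kap mu p 0 = 1"
  using gamma_moment_pos[OF assms, of 0]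
  by (simp add: expansion_coeff_def binomial_truncation_def moment_functional_def)

lemma expansion_coeff_1:
  "expansion_coeff lam kap mu p 1 = kap * moment_functional lam mu (coeff p 1) / gamma_moment lam mu 0"
  using coeff_binomial_truncation_1[of kap p]
  by (simp add: expansion_coeff_def numeral_2_eq_2 moment_functional_smult)

lemma expansion_coeff_2:
  assumes "coeff p 0 = 1"
  shows "expansion_coeff lam kap mu p 2 =
    (kap * moment_functional lam mu (coeff p 2)
      + kap * (kap - 1) / 2 * moment_functional lam mu (coeff p 1 ^ 2)) / gamma_moment lam mu 0"
  using coeff_binomial_truncation_2[OF assms, of kap]
  by (simp add: expansion_coeff_def numeral_3_eq_3 [symmetric] moment_functional_smult
      moment_functional_add)

section \<open>The rescaled Laguerre polynomial\<close>

lemma coeff_prod_linear_factors: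
  fixes b :: "'i \<Rightarrow> 'a :: comm_ring_1"
  assumes "finite A"
  shows "coeff (\<Prod>j\<in>A. [:1, b j:]) 0 = 1 \<and>
    coeff (\<Prod>j\<in>A. [:1, b j:]) 1 = (\<Sum>j\<in>A. b j) \<and>
    2 * coeff (\<Prod>j\<in>A. [:1, b j:]) 2 = (\<Sum>j\<in>A. b j) ^ 2 - (\<Sum>j\<in>A. b j ^ 2)"
  using assms
proof (induction A rule: finite_induct)
  case (insert i A)
  have "coeff ([:1, b i:] * q) (Suc n) = coeff q (Suc n) + b i * coeff q n" for q n
    by simp
  from this[of _ 0] this[of _ 1] show ?case
    using insert by (simp add: numeral_2_eq_2 algebra_simps power2_eq_square)
qed simp

definition laguerre_factor :: "nat \<Rightarrow> nat \<Rightarrow> real poly poly" where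
  "laguerre_factor m k = (\<Prod>j\<in>{k<..m}. [:1, of_nat j:])"

definition scaled_laguerre :: "nat \<Rightarrow> real poly poly" where
  "scaled_laguerre m =
     (\<Sum>k\<le>m. monom (smult (real (m choose k)) ([:0, -1:] ^ k)) k * laguerre_factor m k)"

lemma poly_scaled_laguerre:
  "poly (poly (scaled_laguerre m) [:t:]) x =
     (\<Sum>k\<le>m. real (m choose k) * (- x) ^ k * t ^ k * (\<Prod>j\<in>{k<..m}. 1 + real j * t))"
  by (simp add: scaled_laguerre_def laguerre_factor_def poly_sum poly_prod poly_monom poly_power
      of_nat_poly mult_ac)

lemma gbinomial_shifted_prod:
  assumes "k \<le> m"
  shows "(real m + a) gchoose (m - k) = (\<Prod>j\<in>{k<..m}. a + real j) / fact (m - k)"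
proof -
  have "(\<Prod>i=0..<m - k. real m + a - real i) = (\<Prod>j\<in>{k<..m}. a + real j)"
    using assms by (intro prod.reindex_bij_witness[of _ "\<lambda>j. m - j" "\<lambda>i. m - i"]) (auto simp: of_nat_diff)
  then show ?thesis
    by (simp add: gbinomial_prod_rev)
qed

lemma laguerre_eq_scaled_laguerre:
  assumes a: "a > 0"
  shows "laguerre m a x = a ^ m / fact m * poly (poly (scaled_laguerre m) [:1 / a:]) x"
  unfolding laguerre_def poly_scaled_laguerre sum_distrib_left
proof (intro sum.cong refl)
  fix k assume "k \<in> {..m}"
  then have k: "k \<le> m"
    by simp
  have "a ^ m * (1 / a) ^ k * (\<Prod>j\<in>{k<..m}. 1 + real j * (1 / a))
      = (\<Prod>j\<in>{k<..m}. a) * (\<Prod>j\<in>{k<..m}. 1 + real j * (1 / a))"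
    using a k by (simp add: power_diff power_one_over field_simps)
  also have "\<dots> = (\<Prod>j\<in>{k<..m}. a * (1 + real j * (1 / a)))"
    by (rule prod.distrib [symmetric])
  also have "\<dots> = (\<Prod>j\<in>{k<..m}. a + real j)"
    using a by (intro prod.cong) (auto simp: field_simps)
  finally have scale: "a ^ m * (1 / a) ^ k * (\<Prod>j\<in>{k<..m}. 1 + real j * (1 / a))
      = (\<Prod>j\<in>{k<..m}. a + real j)" .
  have "a ^ m / fact m * (real (m choose k) * (- x) ^ k * (1 / a) ^ k * (\<Prod>j\<in>{k<..m}. 1 + real j * (1 / a)))
      = real (m choose k) / fact m * (- x) ^ k * (a ^ m * (1 / a) ^ k * (\<Prod>j\<in>{k<..m}. 1 + real j * (1 / a)))"
    by (simp only: mult_ac times_divide_eq_left times_divide_eq_right)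
  also have "\<dots> = (\<Prod>j\<in>{k<..m}. a + real j) / fact (m - k) * (- x) ^ k / fact k"
    unfolding scale using k by (simp add: binomial_fact field_simps)
  also have "\<dots> = ((real m + a) gchoose (m - k)) * (- x) ^ k / fact k"
    using k by (simp add: gbinomial_shifted_prod)
  finally show "((real m + a) gchoose (m - k)) * (- x) ^ k / fact k
      = a ^ m / fact m * (real (m choose k) * (- x) ^ k * (1 / a) ^ k * (\<Prod>j\<in>{k<..m}. 1 + real j * (1 / a)))"
    by simp
qed

lemma coeff_scaled_laguerre:
  "coeff (scaled_laguerre m) n =
     (\<Sum>k\<le>n. smult (real (m choose k)) ([:0, -1:] ^ k) * coeff (laguerre_factor m k) (n - k))"
proof -
  let ?f = "\<lambda>k. if n < k then 0 else smult (real (m choose k)) ([:0, -1:] ^ k) * coeff (laguerre_factor m k) (n - k)"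
  have "coeff (scaled_laguerre m) n = (\<Sum>k\<le>m. ?f k)"
    by (simp add: scaled_laguerre_def coeff_sum coeff_monom_mult)
  also have "\<dots> = (\<Sum>k\<le>m + n. ?f k)"
    by (rule sum.mono_neutral_left) auto
  also have "\<dots> = (\<Sum>k\<le>n. ?f k)"
    by (rule sum.mono_neutral_right) auto
  finally show ?thesis
    by simp
qed

lemma sum_of_nat_poly: "(\<Sum>j\<in>A. (of_nat (f j) :: real poly)) = [:\<Sum>j\<in>A. real (f j):]"
proof -
  have "(\<Sum>j\<in>A. (of_nat (f j) :: real poly)) = of_nat (\<Sum>j\<in>A. f j)"
    by (rule of_nat_sum [symmetric])
  also have "\<dots> = [:of_nat (\<Sum>j\<in>A. f j):]"
    by (rule of_nat_poly)
  finally show ?thesis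
    by simp
qed

lemma sum_Ioc_0_real: "(\<Sum>j\<in>{0<..m}. real j) = real m * (real m + 1) / 2"
  using double_gauss_sum_from_Suc_0[of m, where ?'a = real] by (simp add: atLeastSucAtMost_greaterThanAtMost)

lemma sum_Ioc_0_real_squared: "(\<Sum>j\<in>{0<..m}. real j ^ 2) = real m * (real m + 1) * (2 * real m + 1) / 6"
proof -
  have "(\<Sum>j\<in>{0<..m}. real j ^ 2) = (\<Sum>j\<le>m. real j ^ 2)"
    by (rule sum.mono_neutral_left) auto
  also have "\<dots> = real m * (real m + 1) * (2 * real m + 1) / 6"
    by (induction m) (simp_all add: field_simps power2_eq_square)
  finally show ?thesis .
qed

lemma coeff_scaled_laguerre_0: "coeff (scaled_laguerre m) 0 = 1"
  by (simp add: coeff_scaled_laguerre laguerre_factor_def coeff_prod_linear_factors)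

lemma coeff_scaled_laguerre_1: "coeff (scaled_laguerre m) 1 = [:real m * (real m + 1) / 2, - real m:]"
  by (simp add: coeff_scaled_laguerre laguerre_factor_def coeff_prod_linear_factors[unfolded One_nat_def]
      sum_of_nat_poly sum_Ioc_0_real)

lemma sum_Ioc_1_real:
  assumes "m \<ge> 1"
  shows "(\<Sum>j\<in>{1<..m}. real j) = real m * (real m + 1) / 2 - 1"
proof -
  have "{0<..m} = insert 1 {1<..m}"
    using assms by auto
  then show ?thesis
    using sum_Ioc_0_real[of m] by simp
qed

lemma coeff_scaled_laguerre_2:
  assumes "m \<ge> 1"
  shows "coeff (scaled_laguerre m) 2 =
    [:((real m * (real m + 1) / 2) ^ 2 - real m * (real m + 1) * (2 * real m + 1) / 6) / 2,
      - real m * (real m * (real m + 1) / 2 - 1), real m * (real m - 1) / 2:]"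
proof -
  define c where "c = coeff (laguerre_factor m 0) 2"
  have "2 * c = [:(real m * (real m + 1) / 2) ^ 2 - real m * (real m + 1) * (2 * real m + 1) / 6:]"
    using coeff_prod_linear_factors[of "{0<..m}" "of_nat :: nat \<Rightarrow> real poly"]
    by (simp add: c_def laguerre_factor_def sum_of_nat_poly sum_Ioc_0_real poly_const_pow
        flip: of_nat_power) (simp add: sum_Ioc_0_real_squared)
  then have "smult 2 c = [:(real m * (real m + 1) / 2) ^ 2 - real m * (real m + 1) * (2 * real m + 1) / 6:]"
    by (simp add: numeral_poly)
  moreover have "c = smult (1 / 2) (smult 2 c)"
    by simp
  ultimately have "c = [:((real m * (real m + 1) / 2) ^ 2 - real m * (real m + 1) * (2 * real m + 1) / 6) / 2:]"
    by simp
  moreover have "coeff (laguerre_factor m 1) 1 = [:real m * (real m + 1) / 2 - 1:]"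
    using sum_Ioc_1_real[OF assms]
    by (simp add: laguerre_factor_def coeff_prod_linear_factors[unfolded One_nat_def] sum_of_nat_poly)
  moreover have "real (m choose 2) = real m * (real m - 1) / 2"
    by (simp add: binomial_gbinomial gbinomial_prod_rev numeral_2_eq_2 atLeast0_lessThan_Suc)
  moreover have "coeff (laguerre_factor m 2) 0 = 1"
    by (simp add: laguerre_factor_def coeff_prod_linear_factors)
  ultimately show ?thesis
    by (simp add: coeff_scaled_laguerre c_def numeral_2_eq_2 algebra_simps)
qed

lemma I1_eq_scaled_laguerre_integral:
  assumes a: "a > 0"
  shows "I1 lam kap mu m a = a powr (kap * real m) / fact m powr kap *
    (LINT x:{0<..}|lborel. gamma_weight lam mu x * \<bar>poly (poly (scaled_laguerre m) [:1 / a:]) x\<bar> powr kap)"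
proof -
  have "\<bar>laguerre m a x\<bar> powr kap
      = a powr (kap * real m) / fact m powr kap * \<bar>poly (poly (scaled_laguerre m) [:1 / a:]) x\<bar> powr kap" for x
    using a by (simp add: laguerre_eq_scaled_laguerre abs_mult powr_mult powr_divide
        powr_realpow [symmetric] powr_powr mult.commute)
  then have "I1 lam kap mu m a = (LINT x:{0<..}|lborel. a powr (kap * real m) / fact m powr kap *
      (gamma_weight lam mu x * \<bar>poly (poly (scaled_laguerre m) [:1 / a:]) x\<bar> powr kap))"
    unfolding I1_def gamma_weight_def by (simp add: mult_ac)
  then show ?thesis
    by simp
qed

lemma laguerre_expansion_coeff_1:
  assumes lam: "lam > 0" and mu: "mu > 0"
  shows "expansion_coeff lam kap mu (scaled_laguerre m) 1
    = kap * real m * (- 2 * mu + real m * lam + lam) / (2 * lam)"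
proof -
  have moment: "moment_functional lam mu (coeff (scaled_laguerre m) 1)
      = (real m * (real m + 1) / 2 - real m * mu / lam) * gamma_moment lam mu 0"
    unfolding coeff_scaled_laguerre_1 using moment_functional_quadratic[OF lam mu, of _ _ 0] by simp
  show ?thesis
    unfolding expansion_coeff_1 moment
    using lam gamma_moment_pos[OF lam mu, of 0] by (simp add: field_simps)
qed

lemma laguerre_expansion_coeff_2:
  assumes lam: "lam > 0" and mu: "mu > 0" and m: "m \<ge> 1"
  shows "expansion_coeff lam kap mu (scaled_laguerre m) 2 = kap * real m / (24 * lam ^ 2) *
      (- 12 * mu * lam * kap * real m ^ 2 + 24 * mu * lam - 12 * mu * lam * kap * real m
       - 4 * real m ^ 2 * lam ^ 2 - 6 * real m * lam ^ 2 + 3 * real m ^ 3 * lam ^ 2 * kap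
       - 12 * mu ^ 2 + 12 * mu ^ 2 * kap * real m - 12 * mu + 12 * mu * kap * real m
       + 6 * lam ^ 2 * kap * real m ^ 2 - 2 * lam ^ 2 + 3 * lam ^ 2 * kap * real m)"
proof -
  define S where "S = real m * (real m + 1) / 2"
  have p1: "coeff (scaled_laguerre m) 1 ^ 2 = [:S ^ 2, - 2 * real m * S, real m ^ 2:]"
    unfolding coeff_scaled_laguerre_1 by (simp add: S_def power2_eq_square algebra_simps)
  define X where "X = (S ^ 2 - real m * (real m + 1) * (2 * real m + 1) / 6) / 2
    + - real m * (S - 1) * mu / lam + real m * (real m - 1) / 2 * mu * (mu + 1) / lam ^ 2"
  define Y where "Y = S ^ 2 + - 2 * real m * S * mu / lam + real m ^ 2 * mu * (mu + 1) / lam ^ 2"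
  have "moment_functional lam mu (coeff (scaled_laguerre m) 2) = X * gamma_moment lam mu 0"
    unfolding coeff_scaled_laguerre_2[OF m] moment_functional_quadratic[OF lam mu] X_def S_def ..
  moreover have "moment_functional lam mu (coeff (scaled_laguerre m) 1 ^ 2) = Y * gamma_moment lam mu 0"
    unfolding p1 moment_functional_quadratic[OF lam mu] Y_def ..
  ultimately have "expansion_coeff lam kap mu (scaled_laguerre m) 2 = kap * X + kap * (kap - 1) / 2 * Y"
    unfolding expansion_coeff_2[OF coeff_scaled_laguerre_0]
    using gamma_moment_pos[OF lam mu, of 0] by (simp add: field_simps)
  also have "\<dots> = kap * real m / (24 * lam ^ 2) *
      (- 12 * mu * lam * kap * real m ^ 2 + 24 * mu * lam - 12 * mu * lam * kap * real m
       - 4 * real m ^ 2 * lam ^ 2 - 6 * real m * lam ^ 2 + 3 * real m ^ 3 * lam ^ 2 * kap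
       - 12 * mu ^ 2 + 12 * mu ^ 2 * kap * real m - 12 * mu + 12 * mu * kap * real m
       + 6 * lam ^ 2 * kap * real m ^ 2 - 2 * lam ^ 2 + 3 * lam ^ 2 * kap * real m)"
    using lam by (simp add: X_def Y_def S_def field_simps power2_eq_square power3_eq_cube)
  finally show ?thesis .
qed

theorem proposition1:
  fixes lam kap mu :: real and m :: nat
  assumes "lam > 0" and "kap > 0" and "mu > 0" and "m \<ge> 1"
  shows "\<exists>D :: nat \<Rightarrow> real.
    D 0 = 1 \<and>
    D 1 = kap * real m * (- 2 * mu + real m * lam + lam) / (2 * lam) \<and>
    D 2 = kap * real m / (24 * lam ^ 2) *
      (- 12 * mu * lam * kap * real m ^ 2 + 24 * mu * lam - 12 * mu * lam * kap * real m
       - 4 * real m ^ 2 * lam ^ 2 - 6 * real m * lam ^ 2 + 3 * real m ^ 3 * lam ^ 2 * kap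
       - 12 * mu ^ 2 + 12 * mu ^ 2 * kap * real m - 12 * mu + 12 * mu * kap * real m
       + 6 * lam ^ 2 * kap * real m ^ 2 - 2 * lam ^ 2 + 3 * lam ^ 2 * kap * real m) \<and>
    (\<forall>N :: nat. \<exists>r :: real \<Rightarrow> real.
       r \<in> O[at_top](\<lambda>a. a powr (- real N)) \<and>
       (\<forall>\<^sub>F a in at_top.
          I1 lam kap mu m a =
            a powr (kap * real m) * Gamma mu / (lam powr mu * fact m powr kap) *
            ((\<Sum>k<N. D k / a ^ k) + r a)))"
proof -
  define D where "D = expansion_coeff lam kap mu (scaled_laguerre m)"
  have "\<exists>r. r \<in> O[at_top](\<lambda>a. a powr - real N) \<and> (\<forall>\<^sub>F a in at_top. I1 lam kap mu m a =
      a powr (kap * real m) * Gamma mu / (lam powr mu * fact m powr kap) * ((\<Sum>k<N. D k / a ^ k) + r a))"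
    for N
  proof -
    obtain r where "r \<in> O[at_top](\<lambda>a. a powr - real N)"
      and "\<forall>\<^sub>F a in at_top.
        (LINT x:{0<..}|lborel. gamma_weight lam mu x * \<bar>poly (poly (scaled_laguerre m) [:1 / a:]) x\<bar> powr kap)
          = gamma_moment lam mu 0 * ((\<Sum>k<N. D k / a ^ k) + r a)"
      using weighted_powr_integral_asymptotics[OF assms(1,3,2) coeff_scaled_laguerre_0]
      unfolding D_def by blast
    moreover from this(2) have "\<forall>\<^sub>F a in at_top. I1 lam kap mu m a =
        a powr (kap * real m) * Gamma mu / (lam powr mu * fact m powr kap) * ((\<Sum>k<N. D k / a ^ k) + r a)"
      using eventually_gt_at_top[of 0]
      by eventually_elim (simp add: I1_eq_scaled_laguerre_integral gamma_moment_0 mult_ac)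
    ultimately show ?thesis
      by blast
  qed
  then show ?thesis
    using expansion_coeff_0[OF assms(1,3)] laguerre_expansion_coeff_1[OF assms(1,3)]
      laguerre_expansion_coeff_2[OF assms(1,3,4)]
    unfolding D_def by blast
qed

end
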